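(* Assume $|V|\ge2$ and let $\overline\kappa_0=\inf_{x\ne y}\overline\kappa(x,y)$. If $\mu>0$ and there exists a nonzero $f\in\mathbb{R}^V$ with $\mathcal{L}^0f=\mu f$, then $\overline\kappa_0\le\mu$.
   Context: Let $H=(V,E,w)$ be a weighted hypergraph: $V$ is a finite set, $E$ a set of nonempty subsets of $V$, $w\colon E\to\mathbb{R}_{>0}$. Write $x\sim y$ if some $e\in E$ contains both; $H$ is assumed connected. The degree is $d_x=\sum_{e\ni x}w_e>0$, $D=\mathrm{diag}(d_x)$. The distance $d(x,y)$ is the minimal $n$ with a chain $x=z_0\sim\cdots\sim z_n=y$. $\delta_x$ is the indicator of $x$. $\mathbb{R}^V$ carries the inner product $\langle f,g\rangle=\sum_x f(x)g(x)/d_x$ with norm $\|\cdot\|$. For $e\in E$ let $B_e=\mathrm{Conv}\{\delta_x-\delta_y : x,y\in e\}$. The multivalued hypergraph Laplacian is $L(f)=\{\sum_{e}w_e\mathtt{b}_e(\mathtt{b}_e^\top f) : \mathtt{b}_e\in\operatorname{argmax}_{\mathtt b\in B_e}\mathtt b^\top f\}$ and the normalized Laplacian is $\mathcal{L}f=L(D^{-1}f)$, a maximal monotone operator on $(\mathbb{R}^V,\langle\cdot,\cdot\rangle)$. For $f\in\mathbb{R}^V$, $\mathcal{L}f$ is a nonempty closed convex set and $\mathcal{L}^0f$ denotes its unique element of minimal norm $\|\cdot\|$. For $\lambda>0$ the resolvent $J_\lambda=(I+\lambda\mathcal L)^{-1}$ is a single-valued map $\mathbb{R}^V\to\mathbb{R}^V$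 (equivalently $J_\lambda f=\operatorname{argmin}_g\{\frac{1}{2\lambda}\|f-g\|^2+Q(D^{-1}g)\}$, $Q(g)=\frac12\sum_e w_e\max_{x,y\in e}(g(x)-g(y))^2$). A function $f$ is weighted $1$-Lipschitz if $|f(x)/d_x-f(y)/d_y|\le d(x,y)$ for all $x,y$; $\mathrm{Lip}^1_w(V)$ denotes the set of such functions. $\mathrm{KD}_\lambda(x,y)=\sup\{\langle J_\lambda f,\delta_x-\delta_y\rangle : f\in\mathrm{Lip}^1_w(V)\}$. For $x\ne y$: $\kappa_\lambda(x,y)=1-\mathrm{KD}_\lambda(x,y)/d(x,y)$ and $\overline\kappa(x,y)=\limsup_{\lambda\downarrow0}\kappa_\lambda(x,y)/\lambda$. *)

theory Defs
  imports "HOL-Analysis.Analysis" "HOL-Library.Liminf_Limsup"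
begin

text \<open>Weighted hypergraph on the finite vertex type 'a (V = UNIV), hyperedges E,
  weights w. Functions on V are vectors in real^'a.\<close>

definition hadj :: "'a set set \<Rightarrow> 'a \<Rightarrow> 'a \<Rightarrow> bool" where
  "hadj E x y \<longleftrightarrow> (\<exists>e\<in>E. x \<in> e \<and> y \<in> e)"

definition hconnected :: "'a set set \<Rightarrow> bool" where
  "hconnected E \<longleftrightarrow> (\<forall>x y. \<exists>n. (hadj E ^^ n) x y)"

definition hdist :: "'a set set \<Rightarrow> 'a \<Rightarrow> 'a \<Rightarrow> nat" where
  "hdist E x y = (LEAST n. (hadj E ^^ n) x y)"

definition hdeg :: "'a set set \<Rightarrow> ('a set \<Rightarrow> real) \<Rightarrow> 'a \<Rightarrow> real" where
  "hdeg E w x = (\<Sum>e\<in>{e\<in>E. x \<in> e}. w e)"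

definition delta :: "'a::finite \<Rightarrow> real^'a" where
  "delta x = (\<chi> y. if y = x then 1 else 0)"

definition winner :: "'a set set \<Rightarrow> ('a set \<Rightarrow> real) \<Rightarrow> real^'a::finite \<Rightarrow> real^'a \<Rightarrow> real" where
  "winner E w f g = (\<Sum>x\<in>UNIV. f $ x * g $ x / hdeg E w x)"

definition wnorm :: "'a set set \<Rightarrow> ('a set \<Rightarrow> real) \<Rightarrow> real^'a::finite \<Rightarrow> real" where
  "wnorm E w f = sqrt (winner E w f f)"

definition Bset :: "'a::finite set \<Rightarrow> (real^'a) set" where
  "Bset e = convex hull {delta x - delta y | x y. x \<in> e \<and> y \<in> e}"

definition argmaxB :: "'a::finite set \<Rightarrow> real^'a \<Rightarrow> (real^'a) set" where
  "argmaxB e f = {b \<in> Bset e. \<forall>b'\<in>Bset e. b' \<bullet> f \<le> b \<bullet> f}"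

definition hLap :: "'a::finite set set \<Rightarrow> ('a set \<Rightarrow> real) \<Rightarrow> real^'a \<Rightarrow> (real^'a) set" where
  "hLap E w f = {(\<Sum>e\<in>E. w e *\<^sub>R ((b e \<bullet> f) *\<^sub>R b e)) | b. \<forall>e\<in>E. b e \<in> argmaxB e f}"

definition Dinv :: "'a set set \<Rightarrow> ('a set \<Rightarrow> real) \<Rightarrow> real^'a::finite \<Rightarrow> real^'a" where
  "Dinv E w f = (\<chi> x. f $ x / hdeg E w x)"

definition nLap :: "'a::finite set set \<Rightarrow> ('a set \<Rightarrow> real) \<Rightarrow> real^'a \<Rightarrow> (real^'a) set" where
  "nLap E w f = hLap E w (Dinv E w f)"

definition nLap0 :: "'a::finite set set \<Rightarrow> ('a set \<Rightarrow> real) \<Rightarrow> real^'a \<Rightarrow> real^'a" where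
  "nLap0 E w f = (THE g. g \<in> nLap E w f \<and> (\<forall>h\<in>nLap E w f. wnorm E w g \<le> wnorm E w h))"

definition resolvent :: "'a::finite set set \<Rightarrow> ('a set \<Rightarrow> real) \<Rightarrow> real \<Rightarrow> real^'a \<Rightarrow> real^'a" where
  "resolvent E w lam f = (THE g. \<exists>h\<in>nLap E w g. f = g + lam *\<^sub>R h)"

definition wLip1 :: "'a set set \<Rightarrow> ('a set \<Rightarrow> real) \<Rightarrow> real^'a::finite \<Rightarrow> bool" where
  "wLip1 E w f \<longleftrightarrow> (\<forall>x y. \<bar>f $ x / hdeg E w x - f $ y / hdeg E w y\<bar> \<le> real (hdist E x y))"

definition KD :: "'a::finite set set \<Rightarrow> ('a set \<Rightarrow> real) \<Rightarrow> real \<Rightarrow> 'a \<Rightarrow> 'a \<Rightarrow> real" where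
  "KD E w lam x y = Sup {winner E w (resolvent E w lam f) (delta x - delta y) | f. wLip1 E w f}"

definition kappa :: "'a::finite set set \<Rightarrow> ('a set \<Rightarrow> real) \<Rightarrow> real \<Rightarrow> 'a \<Rightarrow> 'a \<Rightarrow> real" where
  "kappa E w lam x y = 1 - KD E w lam x y / real (hdist E x y)"

definition kappa_bar :: "'a::finite set set \<Rightarrow> ('a set \<Rightarrow> real) \<Rightarrow> 'a \<Rightarrow> 'a \<Rightarrow> ereal" where
  "kappa_bar E w x y = Limsup (at_right 0) (\<lambda>lam. ereal (kappa E w lam x y / lam))"

definition kappa_bar0 :: "'a::finite set set \<Rightarrow> ('a set \<Rightarrow> real) \<Rightarrow> ereal" where
  "kappa_bar0 E w = (INF p\<in>{(x, y). x \<noteq> y}. kappa_bar E w (fst p) (snd p))"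

end

theory Submission
  imports Defs
begin

text \<open>Write \<open>F = D\<^sup>-\<^sup>1 f\<close>. Since \<open>\<mu> f \<in> \<L> f = L F\<close> and \<open>L\<close> vanishes on constants, \<open>F\<close> is
  not constant, so \<open>f\<close> can be rescaled to a weighted \<open>1\<close>-Lipschitz function for which
  \<open>F x - F y = d(x, y)\<close> at some pair \<open>x \<noteq> y\<close>. The resolvent maps this eigenvector to
  \<open>f / (1 + \<lambda> \<mu>)\<close>, hence \<open>KD\<^sub>\<lambda>(x, y) \<ge> d(x, y) / (1 + \<lambda> \<mu>)\<close> and \<open>\<kappa>\<^sub>\<lambda>(x, y) / \<lambda> \<le> \<mu>\<close>.
  Most of the work goes into showing that \<open>I + \<lambda> \<L>\<close> is surjective, so that \<open>J\<^sub>\<lambda>\<close> is defined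
  on all functions and \<open>KD\<^sub>\<lambda>\<close> is a finite supremum: the resolvent is obtained by minimising
  a convex energy, and its first-order condition is turned into membership in \<open>\<L>\<close> by
  separating hyperplanes.\<close>

section \<open>Edge polytopes\<close>

definition edge_diffs :: "'a::finite set \<Rightarrow> (real^'a) set" where
  "edge_diffs e = {delta x - delta y | x y. x \<in> e \<and> y \<in> e}"

definition spread :: "'a::finite set \<Rightarrow> real^'a \<Rightarrow> real" where
  "spread e v = Max ((\<lambda>b. b \<bullet> v) ` edge_diffs e)"

lemma inner_delta_left [simp]: "delta x \<bullet> v = v $ x"
proof -
  have "(\<Sum>i\<in>UNIV. (if i = x then 1 else 0) * v $ i) = (\<Sum>i\<in>UNIV. if i = x then v $ i else 0)"
    by (rule sum.cong) auto
  then show ?thesis by (simp add: delta_def inner_vec_def)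
qed

lemma inner_delta_right [simp]: "v \<bullet> delta x = v $ x"
  by (metis inner_commute inner_delta_left)

lemma finite_edge_diffs: "finite (edge_diffs e)"
proof -
  have "edge_diffs e = (\<lambda>(x, y). delta x - delta y) ` (e \<times> e)"
    unfolding edge_diffs_def by auto
  then show ?thesis by simp
qed

lemma zero_in_edge_diffs: "e \<noteq> {} \<Longrightarrow> 0 \<in> edge_diffs e"
  unfolding edge_diffs_def by force

lemma edge_diffs_subset_Bset: "edge_diffs e \<subseteq> Bset e"
  unfolding Bset_def edge_diffs_def by (rule hull_subset)

lemma inner_le_spread: "b \<in> edge_diffs e \<Longrightarrow> b \<bullet> v \<le> spread e v"
  unfolding spread_def using finite_edge_diffs by (intro Max_ge) auto

lemma spread_attained:
  assumes "e \<noteq> {}"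
  shows "\<exists>b\<in>edge_diffs e. b \<bullet> v = spread e v"
proof -
  have "(\<lambda>b. b \<bullet> v) ` edge_diffs e \<noteq> {}"
    using zero_in_edge_diffs[OF assms] by blast
  from Max_in[OF finite_imageI[OF finite_edge_diffs] this] show ?thesis
    unfolding spread_def by auto
qed

lemma spread_nonneg: "e \<noteq> {} \<Longrightarrow> 0 \<le> spread e v"
  using inner_le_spread[OF zero_in_edge_diffs, of e v] by simp

lemma spread_zero: "e \<noteq> {} \<Longrightarrow> spread e 0 = 0"
  using spread_attained[of e 0] by auto

lemma continuous_on_Max_inner:
  fixes P :: "'b::real_inner set"
  assumes "finite P" "P \<noteq> {}"
  shows "continuous_on S (\<lambda>v. Max ((\<lambda>b. b \<bullet> v) ` P))"
  using assms
proof (induction P rule: finite_ne_induct)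
  case (singleton b)
  then show ?case by (simp add: continuous_on_inner continuous_on_const continuous_on_id)
next
  case (insert b P)
  then have "(\<lambda>v. Max ((\<lambda>b. b \<bullet> v) ` insert b P)) = (\<lambda>v. max (b \<bullet> v) (Max ((\<lambda>b. b \<bullet> v) ` P)))"
    by auto
  with insert show ?case by (auto intro!: continuous_intros)
qed

lemma continuous_on_spread: "e \<noteq> {} \<Longrightarrow> continuous_on S (\<lambda>v. spread e v)"
  unfolding spread_def using zero_in_edge_diffs
  by (intro continuous_on_Max_inner finite_edge_diffs) auto

lemma Bset_inner_le_spread: "b \<in> Bset e \<Longrightarrow> b \<bullet> v \<le> spread e v"
proof -
  have "convex {b. b \<bullet> v \<le> spread e v}"
    using convex_halfspace_le[of v "spread e v"] by (simp add: inner_commute)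
  then have "Bset e \<subseteq> {b. b \<bullet> v \<le> spread e v}"
    unfolding Bset_def edge_diffs_def[symmetric] by (intro hull_minimal) (auto simp: inner_le_spread)
  then show "b \<in> Bset e \<Longrightarrow> ?thesis" by blast
qed

lemma Bset_orthogonal_ones: "b \<in> Bset e \<Longrightarrow> b \<bullet> (\<chi> i. 1) = 0"
proof -
  have "Bset e \<subseteq> {b. (\<chi> i. 1) \<bullet> b = 0}"
    unfolding Bset_def edge_diffs_def[symmetric]
    by (rule hull_minimal) (auto simp: convex_hyperplane edge_diffs_def inner_diff_right)
  then show "b \<in> Bset e \<Longrightarrow> ?thesis" by (auto simp: inner_commute)
qed

lemma argmaxB_eq:
  assumes "e \<noteq> {}"
  shows "argmaxB e v = Bset e \<inter> {b. spread e v \<le> b \<bullet> v}"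
proof -
  obtain p where "p \<in> Bset e" "p \<bullet> v = spread e v"
    using spread_attained[OF assms] edge_diffs_subset_Bset by blast
  then show ?thesis
    unfolding argmaxB_def using Bset_inner_le_spread by (auto intro: order_trans)
qed

lemma inner_argmaxB: "e \<noteq> {} \<Longrightarrow> b \<in> argmaxB e v \<Longrightarrow> b \<bullet> v = spread e v"
  by (auto simp: argmaxB_eq intro: antisym Bset_inner_le_spread)

lemma edge_diff_in_argmaxB:
  "e \<noteq> {} \<Longrightarrow> b \<in> edge_diffs e \<Longrightarrow> b \<bullet> v = spread e v \<Longrightarrow> b \<in> argmaxB e v"
  using edge_diffs_subset_Bset by (auto simp: argmaxB_eq)

lemma argmaxB_nonempty: "e \<noteq> {} \<Longrightarrow> \<exists>b. b \<in> argmaxB e v"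
  using spread_attained edge_diff_in_argmaxB by blast

lemma compact_Bset: "compact (Bset e)"
  unfolding Bset_def edge_diffs_def[symmetric]
  by (intro finite_imp_compact_convex_hull finite_edge_diffs)

lemma compact_argmaxB: "e \<noteq> {} \<Longrightarrow> compact (argmaxB e v)"
  unfolding argmaxB_eq using closed_halfspace_ge[of "spread e v" v]
  by (intro compact_Int_closed compact_Bset) (simp add: inner_commute)

lemma convex_argmaxB: "e \<noteq> {} \<Longrightarrow> convex (argmaxB e v)"
  unfolding argmaxB_eq Bset_def using convex_halfspace_ge[of "spread e v" v]
  by (intro convex_Int convex_convex_hull) (simp add: inner_commute)

section \<open>The hypergraph Laplacian\<close>

lemma compact_set_sum:
  fixes B :: "'i \<Rightarrow> ('b::real_normed_vector) set"
  assumes "\<And>i. i \<in> A \<Longrightarrow> compact (B i)"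
  shows "compact (\<Sum>i\<in>A. B i)"
  using assms
proof (induction A rule: infinite_finite_induct)
  case (insert i A)
  have "B i + (\<Sum>i\<in>A. B i) = {x + y | x y. x \<in> B i \<and> y \<in> (\<Sum>i\<in>A. B i)}"
    by (auto simp: set_plus_def)
  also have "compact \<dots>"
    using insert.IH insert.prems by (intro compact_sums) auto
  finally show ?case
    using insert.hyps by simp
qed simp_all

lemma hLap_memI:
  "\<forall>e\<in>E. b e \<in> argmaxB e v \<Longrightarrow> (\<Sum>e\<in>E. w e *\<^sub>R ((b e \<bullet> v) *\<^sub>R b e)) \<in> hLap E w v"
  unfolding hLap_def by blast

lemma hLap_memE:
  assumes "h \<in> hLap E w v"
  obtains b where "\<forall>e\<in>E. b e \<in> argmaxB e v" "h = (\<Sum>e\<in>E. w e *\<^sub>R ((b e \<bullet> v) *\<^sub>R b e))"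
  using assms unfolding hLap_def by blast

lemma hLap_eq_set_sum:
  assumes "\<forall>e\<in>E. e \<noteq> {}"
  shows "hLap E w v = (\<Sum>e\<in>E. (\<lambda>b. (w e * spread e v) *\<^sub>R b) ` argmaxB e v)"
proof -
  have inner_eq: "b \<bullet> v = spread e v" if "e \<in> E" "b \<in> argmaxB e v" for e b
    using that assms inner_argmaxB by blast
  have "hLap E w v = {\<Sum>e\<in>E. c e | c. \<forall>e\<in>E. c e \<in> (\<lambda>b. (w e * spread e v) *\<^sub>R b) ` argmaxB e v}"
  proof safe
    fix h assume "h \<in> hLap E w v"
    then obtain b where b: "\<forall>e\<in>E. b e \<in> argmaxB e v" "h = (\<Sum>e\<in>E. w e *\<^sub>R ((b e \<bullet> v) *\<^sub>R b e))"
      by (rule hLap_memE)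
    then show "\<exists>c. h = sum c E \<and> (\<forall>e\<in>E. c e \<in> (\<lambda>b. (w e * spread e v) *\<^sub>R b) ` argmaxB e v)"
      by (intro exI[of _ "\<lambda>e. w e *\<^sub>R ((b e \<bullet> v) *\<^sub>R b e)"]) (auto simp: inner_eq)
  next
    fix c assume "\<forall>e\<in>E. c e \<in> (\<lambda>b. (w e * spread e v) *\<^sub>R b) ` argmaxB e v"
    then have "\<forall>e\<in>E. \<exists>b. b \<in> argmaxB e v \<and> c e = (w e * spread e v) *\<^sub>R b"
      by blast
    then obtain b where b: "\<forall>e\<in>E. b e \<in> argmaxB e v \<and> c e = (w e * spread e v) *\<^sub>R b e"
      by (rule bchoice[elim_format]) blast
    then have "sum c E = (\<Sum>e\<in>E. w e *\<^sub>R ((b e \<bullet> v) *\<^sub>R b e))"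
      by (intro sum.cong) (simp_all add: inner_eq)
    also have "\<dots> \<in> hLap E w v"
      using b by (intro hLap_memI) blast
    finally show "sum c E \<in> hLap E w v" .
  qed
  also have "\<dots> = (\<Sum>e\<in>E. (\<lambda>b. (w e * spread e v) *\<^sub>R b) ` argmaxB e v)"
    by (rule set_sum_alt[symmetric]) simp
  finally show ?thesis .
qed

lemma compact_hLap:
  assumes "\<forall>e\<in>E. e \<noteq> {}"
  shows "compact (hLap E w v)"
  unfolding hLap_eq_set_sum[OF assms] using assms
  by (intro compact_set_sum compact_scaling compact_argmaxB) blast

lemma convex_hLap:
  assumes "\<forall>e\<in>E. e \<noteq> {}"
  shows "convex (hLap E w v)"
  unfolding hLap_eq_set_sum[OF assms] using assms
  by (intro convex_set_sum convex_scaling convex_argmaxB) blast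

lemma hLap_nonempty:
  assumes "\<forall>e\<in>E. e \<noteq> {}"
  shows "hLap E w v \<noteq> {}"
proof -
  have "\<forall>e\<in>E. \<exists>b. b \<in> argmaxB e v"
    using argmaxB_nonempty assms by blast
  then obtain b where "\<forall>e\<in>E. b e \<in> argmaxB e v"
    by (rule bchoice[elim_format]) blast
  then have "(\<Sum>e\<in>E. w e *\<^sub>R ((b e \<bullet> v) *\<^sub>R b e)) \<in> hLap E w v"
    by (rule hLap_memI)
  then show ?thesis by blast
qed

lemma inner_hLap_orthogonal_ones: "h \<in> hLap E w v \<Longrightarrow> h \<bullet> (\<chi> i. 1) = 0"
  by (erule hLap_memE)
     (auto simp: inner_sum_left argmaxB_def Bset_orthogonal_ones intro!: sum.neutral)

lemma inner_hLap_self_nonneg: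
  "\<forall>e\<in>E. w e > 0 \<Longrightarrow> h \<in> hLap E w v \<Longrightarrow> 0 \<le> h \<bullet> v"
  by (erule hLap_memE) (auto simp: inner_sum_left mult.assoc intro!: sum_nonneg)

lemma hLap_scaleR:
  assumes "c > 0" "h \<in> hLap E w v"
  shows "c *\<^sub>R h \<in> hLap E w (c *\<^sub>R v)"
proof -
  obtain b where b: "\<forall>e\<in>E. b e \<in> argmaxB e v" "h = (\<Sum>e\<in>E. w e *\<^sub>R ((b e \<bullet> v) *\<^sub>R b e))"
    using assms(2) by (rule hLap_memE)
  have "\<forall>e\<in>E. b e \<in> argmaxB e (c *\<^sub>R v)"
    using b(1) assms(1) unfolding argmaxB_def by (auto simp: mult_left_mono)
  then have "(\<Sum>e\<in>E. w e *\<^sub>R ((b e \<bullet> (c *\<^sub>R v)) *\<^sub>R b e)) \<in> hLap E w (c *\<^sub>R v)"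
    by (rule hLap_memI)
  moreover have "c *\<^sub>R h = (\<Sum>e\<in>E. w e *\<^sub>R ((b e \<bullet> (c *\<^sub>R v)) *\<^sub>R b e))"
    using b(2) by (simp add: scaleR_sum_right mult.left_commute)
  ultimately show ?thesis by simp
qed

lemma hLap_const: "h \<in> hLap E w (k *\<^sub>R (\<chi> i. 1)) \<Longrightarrow> h = 0"
  by (erule hLap_memE) (auto simp: argmaxB_def Bset_orthogonal_ones intro!: sum.neutral)

lemma hLap_monotone:
  assumes E: "\<forall>e\<in>E. e \<noteq> {}" "\<forall>e\<in>E. w e > 0"
    and h1: "h1 \<in> hLap E w v1" and h2: "h2 \<in> hLap E w v2"
  shows "0 \<le> (h1 - h2) \<bullet> (v1 - v2)"
proof -
  obtain b1 where b1: "\<forall>e\<in>E. b1 e \<in> argmaxB e v1" "h1 = (\<Sum>e\<in>E. w e *\<^sub>R ((b1 e \<bullet> v1) *\<^sub>R b1 e))"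
    using h1 by (rule hLap_memE)
  obtain b2 where b2: "\<forall>e\<in>E. b2 e \<in> argmaxB e v2" "h2 = (\<Sum>e\<in>E. w e *\<^sub>R ((b2 e \<bullet> v2) *\<^sub>R b2 e))"
    using h2 by (rule hLap_memE)
  have edge_term: "0 \<le> (b1 e \<bullet> v1) * (b1 e \<bullet> (v1 - v2)) - (b2 e \<bullet> v2) * (b2 e \<bullet> (v1 - v2))"
    if e: "e \<in> E" for e
  proof -
    define m1 m2 where "m1 = spread e v1" and "m2 = spread e v2"
    have eq: "b1 e \<bullet> v1 = m1" "b2 e \<bullet> v2 = m2"
      using b1(1) b2(1) e E(1) inner_argmaxB unfolding m1_def m2_def by blast+
    have "b1 e \<bullet> v2 \<le> m2" "b2 e \<bullet> v1 \<le> m1"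
      using b1(1) b2(1) e Bset_inner_le_spread unfolding m1_def m2_def argmaxB_def by blast+
    moreover have "0 \<le> m1" "0 \<le> m2"
      using e E(1) spread_nonneg unfolding m1_def m2_def by blast+
    ultimately have "m1 * (b1 e \<bullet> v2) \<le> m1 * m2" "m2 * (b2 e \<bullet> v1) \<le> m2 * m1"
      by (simp_all add: mult_left_mono)
    moreover have "0 \<le> (m1 - m2) * (m1 - m2)"
      by simp
    ultimately show ?thesis
      unfolding eq inner_diff_right by (simp add: algebra_simps)
  qed
  have "(h1 - h2) \<bullet> (v1 - v2)
      = (\<Sum>e\<in>E. w e * ((b1 e \<bullet> v1) * (b1 e \<bullet> (v1 - v2)) - (b2 e \<bullet> v2) * (b2 e \<bullet> (v1 - v2))))"
    by (simp add: b1(2) b2(2) inner_diff_left inner_sum_left right_diff_distrib sum_subtractf mult.assoc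
        del: inner_diff_right)
  also have "0 \<le> \<dots>"
    using edge_term E(2) by (intro sum_nonneg mult_nonneg_nonneg) auto
  finally show ?thesis .
qed

section \<open>Directional derivatives of the spread\<close>

lemma eventually_Max_inner_le:
  fixes P :: "'b::real_inner set" and u z :: 'b
  assumes fin: "finite P" and ne: "P \<noteq> {}"
  defines "m \<equiv> Max ((\<lambda>b. b \<bullet> u) ` P)"
  shows "\<forall>\<^sub>F t in at_right 0.
    Max ((\<lambda>b. b \<bullet> (u + t *\<^sub>R z)) ` P) \<le> m + t * Max ((\<lambda>b. b \<bullet> z) ` {b\<in>P. b \<bullet> u = m})"
proof -
  define A where "A = {b\<in>P. b \<bullet> u = m}"
  define M where "M = Max ((\<lambda>b. b \<bullet> z) ` A)"
  have "m \<in> (\<lambda>b. b \<bullet> u) ` P"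
    unfolding m_def using fin ne by (intro Max_in) auto
  then have "A \<noteq> {}" unfolding A_def by auto
  then have le_M: "b \<bullet> z \<le> M" if "b \<in> A" for b
    unfolding M_def using that fin by (intro Max_ge) (auto simp: A_def)
  have "\<forall>\<^sub>F t in at_right 0. b \<bullet> (u + t *\<^sub>R z) \<le> m + t * M" if b: "b \<in> P" for b
  proof (cases "b \<in> A")
    case True
    then have "b \<bullet> u = m" by (simp add: A_def)
    with le_M[OF True] show ?thesis
      by (intro eventually_mono[OF eventually_at_right_less]) (simp add: inner_add_right mult_left_mono)
  next
    case False
    have "b \<bullet> u \<le> m"
      unfolding m_def using b fin by (intro Max_ge) auto
    with False b have "b \<bullet> u < m" by (simp add: A_def)
    moreover have "((\<lambda>t. b \<bullet> (u + t *\<^sub>R z) - t * M) \<longlongrightarrow> b \<bullet> u) (at_right 0)"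
      by (auto intro!: tendsto_eq_intros)
    ultimately have "\<forall>\<^sub>F t in at_right 0. b \<bullet> (u + t *\<^sub>R z) - t * M < m"
      by (simp add: order_tendstoD(2))
    then show ?thesis by eventually_elim simp
  qed
  then have "\<forall>\<^sub>F t in at_right 0. \<forall>b\<in>P. b \<bullet> (u + t *\<^sub>R z) \<le> m + t * M"
    by (intro eventually_ball_finite fin) blast
  then show ?thesis
    by eventually_elim (simp add: fin ne M_def A_def)
qed

definition active_diffs :: "'a::finite set \<Rightarrow> real^'a \<Rightarrow> (real^'a) set" where
  "active_diffs e u = {b\<in>edge_diffs e. b \<bullet> u = spread e u}"

text \<open>The one-sided directional derivative of \<open>spread e\<close> at \<open>u\<close> in direction \<open>z\<close>.\<close>
definition spread_slope :: "'a::finite set \<Rightarrow> real^'a \<Rightarrow> real^'a \<Rightarrow> real" where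
  "spread_slope e u z = Max ((\<lambda>b. b \<bullet> z) ` active_diffs e u)"

lemma eventually_spread_le:
  assumes "e \<noteq> {}"
  shows "\<forall>\<^sub>F t in at_right 0. spread e (u + t *\<^sub>R z) \<le> spread e u + t * spread_slope e u z"
proof -
  have "edge_diffs e \<noteq> {}"
    using zero_in_edge_diffs[OF assms] by blast
  from eventually_Max_inner_le[OF finite_edge_diffs this, of u z] show ?thesis
    unfolding spread_slope_def active_diffs_def spread_def .
qed

lemma spread_slope_attained:
  assumes "e \<noteq> {}"
  shows "\<exists>b\<in>active_diffs e u. b \<bullet> z = spread_slope e u z"
proof -
  have ne: "(\<lambda>b. b \<bullet> z) ` active_diffs e u \<noteq> {}"
    using spread_attained[OF assms] by (auto simp: active_diffs_def)
  have "finite (active_diffs e u)"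
    by (rule finite_subset[OF _ finite_edge_diffs]) (auto simp: active_diffs_def)
  from Max_in[OF finite_imageI[OF this] ne] show ?thesis
    unfolding spread_slope_def by auto
qed

text \<open>The right-hand side is the support function of the compact convex set \<open>hLap E w u\<close>
  in direction \<open>z\<close>; the criterion follows by separating \<open>p\<close> from that set.\<close>
lemma hLap_memI_slope:
  assumes E: "\<forall>e\<in>E. e \<noteq> {}"
    and le: "\<And>z. p \<bullet> z \<le> (\<Sum>e\<in>E. w e * spread e u * spread_slope e u z)"
  shows "p \<in> hLap E w u"
proof (rule ccontr)
  assume "p \<notin> hLap E w u"
  then obtain a \<beta> where a: "a \<bullet> p < \<beta>" "\<forall>k\<in>hLap E w u. \<beta> < a \<bullet> k"
    using separating_hyperplane_closed_point[OF convex_hLap[OF E] compact_imp_closed[OF compact_hLap[OF E]]]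
    by blast
  define z where "z = - a"
  have "\<forall>e\<in>E. \<exists>b. b \<in> active_diffs e u \<and> b \<bullet> z = spread_slope e u z"
  proof
    fix e assume "e \<in> E"
    then show "\<exists>b. b \<in> active_diffs e u \<and> b \<bullet> z = spread_slope e u z"
      using spread_slope_attained[of e u z] E by blast
  qed
  then obtain b where b: "\<forall>e\<in>E. b e \<in> active_diffs e u \<and> b e \<bullet> z = spread_slope e u z"
    by (rule bchoice[elim_format]) blast
  define k where "k = (\<Sum>e\<in>E. w e *\<^sub>R ((b e \<bullet> u) *\<^sub>R b e))"
  have "\<forall>e\<in>E. b e \<in> argmaxB e u"
  proof
    fix e assume "e \<in> E"
    with b E show "b e \<in> argmaxB e u"
      by (intro edge_diff_in_argmaxB) (auto simp: active_diffs_def)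
  qed
  then have "k \<in> hLap E w u"
    unfolding k_def by (rule hLap_memI)
  then have "\<beta> < a \<bullet> k" using a(2) by blast
  have "k \<bullet> z = (\<Sum>e\<in>E. w e * ((b e \<bullet> u) * (b e \<bullet> z)))"
    by (simp add: k_def inner_sum_left mult.assoc)
  also have "\<dots> = (\<Sum>e\<in>E. w e * spread e u * spread_slope e u z)"
    using b by (intro sum.cong) (simp_all add: active_diffs_def)
  finally have kz: "k \<bullet> z = (\<Sum>e\<in>E. w e * spread e u * spread_slope e u z)" .
  have "k \<bullet> z < p \<bullet> z"
    using a(1) \<open>\<beta> < a \<bullet> k\<close> by (simp add: z_def inner_commute)
  with le[of z] kz show False
    by linarith
qed

lemma Dinv_add: "Dinv E w (f + g) = Dinv E w f + Dinv E w g"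
  by (simp add: Dinv_def vec_eq_iff add_divide_distrib)

lemma Dinv_diff: "Dinv E w (f - g) = Dinv E w f - Dinv E w g"
  by (simp add: Dinv_def vec_eq_iff diff_divide_distrib)

lemma Dinv_scaleR: "Dinv E w (c *\<^sub>R f) = c *\<^sub>R Dinv E w f"
  by (simp add: Dinv_def vec_eq_iff)

lemma Dinv_minus: "Dinv E w (- f) = - Dinv E w f"
  by (simp add: Dinv_def vec_eq_iff)

lemma winner_eq_inner_Dinv: "winner E w f g = f \<bullet> Dinv E w g"
  by (simp add: winner_def inner_vec_def Dinv_def)

lemma winner_commute: "winner E w f g = winner E w g f"
  unfolding winner_def by (simp add: mult.commute)

lemma winner_delta_diff: "winner E w f (delta x - delta y) = f $ x / hdeg E w x - f $ y / hdeg E w y"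
proof -
  have "winner E w f (delta x - delta y)
      = (\<Sum>z\<in>UNIV. (if z = x then f $ z / hdeg E w z else 0) - (if z = y then f $ z / hdeg E w z else 0))"
    unfolding winner_def by (rule sum.cong) (auto simp: delta_def)
  then show ?thesis by (simp add: sum_subtractf)
qed

lemma winner_add_scaleR:
  "winner E w (a + t *\<^sub>R b) (a + t *\<^sub>R b) = winner E w a a + 2 * t * winner E w b a + t\<^sup>2 * winner E w b b"
  using winner_commute[of E w a b] unfolding winner_eq_inner_Dinv
  by (simp add: Dinv_add Dinv_scaleR inner_add_left inner_add_right power2_eq_square algebra_simps)

lemma winner_midpoint:
  "winner E w ((1/2) *\<^sub>R (a + b)) ((1/2) *\<^sub>R (a + b))
     = (winner E w a a + winner E w b b) / 2 - winner E w (a - b) (a - b) / 4"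
  unfolding winner_eq_inner_Dinv Dinv_add Dinv_diff Dinv_scaleR
  by (simp add: inner_add_left inner_add_right inner_diff_left inner_diff_right
      winner_commute[of E w a b, unfolded winner_eq_inner_Dinv] algebra_simps) (simp add: field_simps)

section \<open>Solvability of the resolvent equation\<close>

lemma continuous_attains_min_if_coercive:
  fixes f :: "'b::{real_normed_vector, heine_borel} \<Rightarrow> real"
  assumes "continuous_on UNIV f" and "\<And>v. R < norm v \<Longrightarrow> f 0 < f v"
  shows "\<exists>u. \<forall>v. f u \<le> f v"
proof -
  have "0 \<le> R"
    using assms(2)[of 0] by fastforce
  then have "cball 0 R \<noteq> {}" by simp
  then obtain u where u: "u \<in> cball 0 R" "\<forall>v\<in>cball 0 R. f u \<le> f v"
    using continuous_attains_inf[OF compact_cball _ continuous_on_subset[OF assms(1) subset_UNIV]] by blast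
  have "f u \<le> f v" for v
  proof (cases "v \<in> cball 0 R")
    case False
    then have "f 0 < f v" by (intro assms(2)) simp
    moreover have "f u \<le> f 0" using u \<open>0 \<le> R\<close> by simp
    ultimately show ?thesis by simp
  qed (use u in blast)
  then show ?thesis by blast
qed

text \<open>With \<open>u = D\<^sup>-\<^sup>1 G\<close> this equals \<open>\<parallel>g - G\<parallel>\<^sup>2 + 2 \<lambda> Q(u) - \<parallel>g\<parallel>\<^sup>2\<close>, so it is minimised exactly
  when \<open>G = J\<^sub>\<lambda> g\<close>.\<close>
definition resolvent_energy ::
    "'a::finite set set \<Rightarrow> ('a set \<Rightarrow> real) \<Rightarrow> real \<Rightarrow> real^'a \<Rightarrow> real^'a \<Rightarrow> real" where
  "resolvent_energy E w lam g u =
     (\<Sum>x\<in>UNIV. hdeg E w x * (u $ x)\<^sup>2 - 2 * g $ x * u $ x) + lam * (\<Sum>e\<in>E. w e * (spread e u)\<^sup>2)"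

locale weighted_hypergraph =
  fixes E :: "'a::finite set set" and w :: "'a set \<Rightarrow> real"
  assumes edges_nonempty: "\<forall>e\<in>E. e \<noteq> {}"
    and weights_pos: "\<forall>e\<in>E. w e > 0"
    and hdeg_pos: "\<forall>x. hdeg E w x > 0"
begin

lemma hdeg_nonzero [simp]: "hdeg E w x \<noteq> 0"
  using hdeg_pos by (metis less_irrefl)

lemma Dinv_hdeg_mult [simp]: "Dinv E w (\<chi> x. hdeg E w x * u $ x) = u"
  by (simp add: Dinv_def vec_eq_iff)

lemma winner_self_nonneg: "0 \<le> winner E w v v"
  unfolding winner_def using hdeg_pos by (intro sum_nonneg) (simp add: less_imp_le)

lemma winner_self_eq_0_iff: "winner E w v v = 0 \<longleftrightarrow> v = 0"
proof
  assume "winner E w v v = 0"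
  then have "\<forall>x\<in>UNIV. v $ x * v $ x / hdeg E w x = 0"
    unfolding winner_def using hdeg_pos by (subst sum_nonneg_eq_0_iff[symmetric]) (auto simp: less_imp_le)
  then show "v = 0" by (simp add: vec_eq_iff)
qed (simp add: winner_def)

lemma component_sq_le_winner: "(v $ x)\<^sup>2 / hdeg E w x \<le> winner E w v v"
proof -
  have "(v $ x)\<^sup>2 / hdeg E w x = v $ x * v $ x / hdeg E w x"
    by (simp add: power2_eq_square)
  also have "\<dots> \<le> winner E w v v"
    unfolding winner_def using hdeg_pos by (intro member_le_sum) (auto simp: less_imp_le)
  finally show ?thesis .
qed

lemma resolvent_energy_zero: "resolvent_energy E w lam g 0 = 0"
  using edges_nonempty by (simp add: resolvent_energy_def spread_zero)

lemma resolvent_energy_ge: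
  assumes "0 \<le> lam"
  shows "Min (range (hdeg E w)) * (norm v)\<^sup>2 - 2 * norm g * norm v \<le> resolvent_energy E w lam g v"
proof -
  define dmin where "dmin = Min (range (hdeg E w))"
  have "dmin * (norm v)\<^sup>2 = (\<Sum>x\<in>UNIV. dmin * (v $ x)\<^sup>2)"
    unfolding power2_norm_eq_inner by (simp add: inner_vec_def power2_eq_square sum_distrib_left)
  also have "\<dots> \<le> (\<Sum>x\<in>UNIV. hdeg E w x * (v $ x)\<^sup>2)"
    unfolding dmin_def by (intro sum_mono mult_right_mono) auto
  finally have "dmin * (norm v)\<^sup>2 \<le> (\<Sum>x\<in>UNIV. hdeg E w x * (v $ x)\<^sup>2)" .
  moreover have "(\<Sum>x\<in>UNIV. 2 * g $ x * v $ x) = 2 * (g \<bullet> v)"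
    by (simp add: inner_vec_def sum_distrib_left mult.assoc)
  moreover have "g \<bullet> v \<le> norm g * norm v"
    by (rule norm_cauchy_schwarz)
  moreover have "0 \<le> lam * (\<Sum>e\<in>E. w e * (spread e v)\<^sup>2)"
    using assms weights_pos by (intro mult_nonneg_nonneg sum_nonneg) auto
  ultimately show ?thesis
    unfolding resolvent_energy_def dmin_def by (simp add: sum_subtractf)
qed

lemma resolvent_energy_has_min:
  assumes "0 \<le> lam"
  shows "\<exists>u. \<forall>v. resolvent_energy E w lam g u \<le> resolvent_energy E w lam g v"
proof (rule continuous_attains_min_if_coercive)
  show "continuous_on UNIV (resolvent_energy E w lam g)"
    unfolding resolvent_energy_def using edges_nonempty
    by (intro continuous_intros continuous_on_spread) auto
next
  define dmin where "dmin = Min (range (hdeg E w))"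
  have dmin: "0 < dmin" unfolding dmin_def using hdeg_pos by simp
  fix v :: "real^'a" assume v: "2 * norm g / dmin < norm v"
  moreover have "0 \<le> 2 * norm g / dmin" using dmin by simp
  ultimately have "0 < norm v" by linarith
  moreover have "2 * norm g < dmin * norm v"
    using v dmin by (simp add: pos_divide_less_eq mult.commute)
  ultimately have "0 < norm v * (dmin * norm v - 2 * norm g)"
    by simp
  also have "\<dots> \<le> resolvent_energy E w lam g v"
    using resolvent_energy_ge[OF assms, of v g] unfolding dmin_def by (simp add: power2_eq_square algebra_simps)
  finally show "resolvent_energy E w lam g 0 < resolvent_energy E w lam g v"
    by (simp add: resolvent_energy_zero)
qed

lemma resolvent_energy_step_le:
  assumes lam: "0 \<le> lam"
    and step: "\<forall>e\<in>E. spread e (u + t *\<^sub>R z) \<le> spread e u + t * s e"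
  shows "resolvent_energy E w lam g (u + t *\<^sub>R z) \<le> resolvent_energy E w lam g u
    + 2 * t * ((\<Sum>x\<in>UNIV. (hdeg E w x * u $ x - g $ x) * z $ x) + lam * (\<Sum>e\<in>E. w e * spread e u * s e))
    + t\<^sup>2 * ((\<Sum>x\<in>UNIV. hdeg E w x * (z $ x)\<^sup>2) + lam * (\<Sum>e\<in>E. w e * (s e)\<^sup>2))"
proof -
  have "(\<Sum>x\<in>UNIV. hdeg E w x * ((u + t *\<^sub>R z) $ x)\<^sup>2 - 2 * g $ x * (u + t *\<^sub>R z) $ x)
      = (\<Sum>x\<in>UNIV. (hdeg E w x * (u $ x)\<^sup>2 - 2 * g $ x * u $ x)
          + 2 * t * ((hdeg E w x * u $ x - g $ x) * z $ x) + t\<^sup>2 * (hdeg E w x * (z $ x)\<^sup>2))"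
    by (intro sum.cong) (simp_all add: power2_eq_square algebra_simps)
  also have "\<dots> = (\<Sum>x\<in>UNIV. hdeg E w x * (u $ x)\<^sup>2 - 2 * g $ x * u $ x)
      + 2 * t * (\<Sum>x\<in>UNIV. (hdeg E w x * u $ x - g $ x) * z $ x) + t\<^sup>2 * (\<Sum>x\<in>UNIV. hdeg E w x * (z $ x)\<^sup>2)"
    by (simp add: sum.distrib sum_distrib_left)
  finally have vertex_part: "(\<Sum>x\<in>UNIV. hdeg E w x * ((u + t *\<^sub>R z) $ x)\<^sup>2 - 2 * g $ x * (u + t *\<^sub>R z) $ x)
      = (\<Sum>x\<in>UNIV. hdeg E w x * (u $ x)\<^sup>2 - 2 * g $ x * u $ x)
      + 2 * t * (\<Sum>x\<in>UNIV. (hdeg E w x * u $ x - g $ x) * z $ x) + t\<^sup>2 * (\<Sum>x\<in>UNIV. hdeg E w x * (z $ x)\<^sup>2)" .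
  have "(\<Sum>e\<in>E. w e * (spread e (u + t *\<^sub>R z))\<^sup>2) \<le> (\<Sum>e\<in>E. w e * (spread e u + t * s e)\<^sup>2)"
  proof (intro sum_mono mult_left_mono power_mono)
    fix e assume e: "e \<in> E"
    then have "e \<noteq> {}" using edges_nonempty by blast
    then show "0 \<le> spread e (u + t *\<^sub>R z)" by (rule spread_nonneg)
    show "spread e (u + t *\<^sub>R z) \<le> spread e u + t * s e" "0 \<le> w e"
      using e step weights_pos by (auto simp: less_imp_le)
  qed
  also have "\<dots> = (\<Sum>e\<in>E. w e * (spread e u)\<^sup>2) + 2 * t * (\<Sum>e\<in>E. w e * spread e u * s e)
      + t\<^sup>2 * (\<Sum>e\<in>E. w e * (s e)\<^sup>2)"
    by (simp add: power2_eq_square algebra_simps sum.distrib sum_distrib_left)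
  finally have edge_part: "(\<Sum>e\<in>E. w e * (spread e (u + t *\<^sub>R z))\<^sup>2) \<le> (\<Sum>e\<in>E. w e * (spread e u)\<^sup>2)
      + 2 * t * (\<Sum>e\<in>E. w e * spread e u * s e) + t\<^sup>2 * (\<Sum>e\<in>E. w e * (s e)\<^sup>2)" .
  show ?thesis
    using mult_left_mono[OF edge_part lam] unfolding resolvent_energy_def vertex_part
    by (simp add: algebra_simps)
qed

lemma resolvent_energy_min_slope:
  assumes lam: "0 \<le> lam"
    and min: "\<forall>v. resolvent_energy E w lam g u \<le> resolvent_energy E w lam g v"
  shows "0 \<le> (\<Sum>x\<in>UNIV. (hdeg E w x * u $ x - g $ x) * z $ x)
    + lam * (\<Sum>e\<in>E. w e * spread e u * spread_slope e u z)"
    (is "0 \<le> ?L")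
proof (rule ccontr)
  assume "\<not> 0 \<le> ?L"
  then have L: "?L < 0" by simp
  define K where "K = (\<Sum>x\<in>UNIV. hdeg E w x * (z $ x)\<^sup>2) + lam * (\<Sum>e\<in>E. w e * (spread_slope e u z)\<^sup>2)"
  have "\<forall>\<^sub>F t in at_right 0. \<forall>e\<in>E. spread e (u + t *\<^sub>R z) \<le> spread e u + t * spread_slope e u z"
  proof (intro eventually_ball_finite ballI)
    fix e assume "e \<in> E"
    with edges_nonempty show "\<forall>\<^sub>F t in at_right 0. spread e (u + t *\<^sub>R z) \<le> spread e u + t * spread_slope e u z"
      by (intro eventually_spread_le) blast
  qed simp
  then have "\<forall>\<^sub>F t in at_right 0.
      resolvent_energy E w lam g (u + t *\<^sub>R z) \<le> resolvent_energy E w lam g u + 2 * t * ?L + t\<^sup>2 * K"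
    by eventually_elim (unfold K_def, rule resolvent_energy_step_le[OF lam])
  moreover have "\<forall>\<^sub>F t in at_right 0. 2 * t * ?L + t\<^sup>2 * K < 0"
  proof -
    have "((\<lambda>t. 2 * ?L + t * K) \<longlongrightarrow> 2 * ?L) (at_right 0)"
      by (auto intro!: tendsto_eq_intros)
    moreover have "2 * ?L < 0" using L by simp
    ultimately have "\<forall>\<^sub>F t in at_right 0. 2 * ?L + t * K < 0"
      by (rule order_tendstoD(2))
    with eventually_at_right_less show ?thesis
    proof eventually_elim
      case (elim t)
      then have "t * (2 * ?L + t * K) < 0" by (intro mult_pos_neg)
      then show ?case by (simp add: power2_eq_square algebra_simps)
    qed
  qed
  ultimately have "\<forall>\<^sub>F t in at_right 0. resolvent_energy E w lam g (u + t *\<^sub>R z) < resolvent_energy E w lam g u"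
    by eventually_elim linarith
  then have "\<forall>\<^sub>F t in at_right (0::real). False"
    by eventually_elim (use min in \<open>simp add: not_less[symmetric]\<close>)
  then show False by (simp add: eventually_False)
qed

lemma resolvent_solvable:
  assumes lam: "0 < lam"
  shows "\<exists>G h. h \<in> hLap E w (Dinv E w G) \<and> g = G + lam *\<^sub>R h"
proof -
  obtain u where min: "\<forall>v. resolvent_energy E w lam g u \<le> resolvent_energy E w lam g v"
    using resolvent_energy_has_min lam by fastforce
  define G where "G = (\<chi> x. hdeg E w x * u $ x)"
  define h where "h = (1 / lam) *\<^sub>R (g - G)"
  have "h \<in> hLap E w u"
  proof (rule hLap_memI_slope[OF edges_nonempty])
    fix z
    have "(g - G) \<bullet> z = - (\<Sum>x\<in>UNIV. (hdeg E w x * u $ x - g $ x) * z $ x)"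
      by (simp add: G_def inner_vec_def sum_negf[symmetric] algebra_simps)
    then have "(g - G) \<bullet> z \<le> lam * (\<Sum>e\<in>E. w e * spread e u * spread_slope e u z)"
      using resolvent_energy_min_slope[OF less_imp_le[OF lam] min, of z] by linarith
    then show "h \<bullet> z \<le> (\<Sum>e\<in>E. w e * spread e u * spread_slope e u z)"
      using lam by (simp add: h_def pos_divide_le_eq mult.commute)
  qed
  moreover have "Dinv E w G = u" by (simp add: G_def)
  moreover have "g = G + lam *\<^sub>R h" using lam by (simp add: h_def)
  ultimately show ?thesis by blast
qed

lemma resolvent_unique:
  assumes lam: "0 < lam"
    and h1: "h1 \<in> hLap E w (Dinv E w G1)" and h2: "h2 \<in> hLap E w (Dinv E w G2)"
    and eq: "G1 + lam *\<^sub>R h1 = G2 + lam *\<^sub>R h2"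
  shows "G1 = G2"
proof -
  have G: "G1 - G2 = (- lam) *\<^sub>R (h1 - h2)"
    using eq by (simp add: algebra_simps eq_diff_eq)
  have "0 \<le> (h1 - h2) \<bullet> (Dinv E w G1 - Dinv E w G2)"
    by (rule hLap_monotone[OF edges_nonempty weights_pos h1 h2])
  also have "\<dots> = - lam * winner E w (h1 - h2) (h1 - h2)"
    by (simp add: winner_eq_inner_Dinv Dinv_diff[symmetric] G Dinv_scaleR Dinv_minus)
  finally have "winner E w (h1 - h2) (h1 - h2) \<le> 0"
    using lam by (simp add: mult_le_0_iff)
  then have "h1 = h2"
    using winner_self_nonneg[of "h1 - h2"] winner_self_eq_0_iff[of "h1 - h2"] by simp
  with G show ?thesis by simp
qed

lemma resolvent_eqI:
  assumes "0 < lam" "h \<in> hLap E w (Dinv E w G)" "g = G + lam *\<^sub>R h"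
  shows "resolvent E w lam g = G"
  unfolding resolvent_def
proof (rule the_equality)
  show "\<exists>h\<in>nLap E w G. g = G + lam *\<^sub>R h"
    using assms by (auto simp: nLap_def)
next
  fix G' assume "\<exists>h'\<in>nLap E w G'. g = G' + lam *\<^sub>R h'"
  then obtain h' where "h' \<in> hLap E w (Dinv E w G')" "g = G' + lam *\<^sub>R h'"
    by (auto simp: nLap_def)
  then show "G' = G"
    using resolvent_unique[OF assms(1) _ assms(2)] assms(3) by simp
qed

lemma resolvent_solves:
  assumes "0 < lam"
  shows "\<exists>h\<in>hLap E w (Dinv E w (resolvent E w lam g)). g = resolvent E w lam g + lam *\<^sub>R h"
proof -
  obtain G h where "h \<in> hLap E w (Dinv E w G)" "g = G + lam *\<^sub>R h"
    using resolvent_solvable[OF assms] by blast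
  moreover from this have "resolvent E w lam g = G"
    by (rule resolvent_eqI[OF assms])
  ultimately show ?thesis by auto
qed

section \<open>Minimal sections and resolvent estimates\<close>

lemma nLap0_in_nLap: "nLap0 E w f \<in> nLap E w f"
proof -
  define S where "S = nLap E w f"
  define W where "W v = winner E w v v" for v
  have S: "compact S" "convex S" "S \<noteq> {}"
    unfolding S_def nLap_def
    by (simp_all add: compact_hLap[OF edges_nonempty] convex_hLap[OF edges_nonempty]
        hLap_nonempty[OF edges_nonempty])
  have "continuous_on S W"
    unfolding W_def winner_def by (intro continuous_intros) simp
  then obtain g0 where g0: "g0 \<in> S" "\<forall>g\<in>S. W g0 \<le> W g"
    using continuous_attains_inf[OF S(1,3)] by blast
  have unique: "g = g0" if g: "g \<in> S" "\<forall>g'\<in>S. W g \<le> W g'" for g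
  proof (rule ccontr)
    assume "g \<noteq> g0"
    then have pos: "0 < W (g - g0)"
      using winner_self_nonneg[of "g - g0"] winner_self_eq_0_iff[of "g - g0"] unfolding W_def by fastforce
    have "(1/2) *\<^sub>R (g + g0) \<in> S"
      using S(2) g(1) g0(1) unfolding convex_def by (simp add: scaleR_add_right)
    then have "W g0 \<le> W ((1/2) *\<^sub>R (g + g0))"
      using g0(2) by blast
    moreover have "W g \<le> W g0" "W g0 \<le> W g"
      using g g0 by blast+
    ultimately show False
      using pos unfolding W_def winner_midpoint by argo
  qed
  have wnorm_le_iff: "wnorm E w a \<le> wnorm E w b \<longleftrightarrow> W a \<le> W b" for a b
    by (simp add: wnorm_def W_def)
  have "nLap0 E w f = g0"
    unfolding nLap0_def S_def[symmetric] wnorm_le_iff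
    by (rule the_equality) (use g0 unique in blast)+
  with g0(1) show ?thesis by (simp add: S_def)
qed

text \<open>Every multiple of the degree vector is a fixed point of \<open>J\<^sub>\<lambda>\<close>, and resolvents of monotone
  operators are nonexpansive.\<close>
lemma resolvent_dist_degree_le:
  fixes c :: real
  assumes lam: "0 \<le> lam" and h: "h \<in> hLap E w (Dinv E w G)" and g: "g = G + lam *\<^sub>R h"
  defines "k \<equiv> c *\<^sub>R (\<chi> x. hdeg E w x)"
  shows "winner E w (G - k) (G - k) \<le> winner E w (g - k) (g - k)"
proof -
  have "Dinv E w k = c *\<^sub>R (\<chi> i. 1)"
    by (simp add: k_def Dinv_def vec_eq_iff)
  then have "0 \<le> winner E w h (G - k)"
    using inner_hLap_self_nonneg[OF weights_pos h] inner_hLap_orthogonal_ones[OF h]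
    by (simp add: winner_eq_inner_Dinv Dinv_diff inner_diff_right)
  moreover have "g - k = (G - k) + lam *\<^sub>R h"
    by (simp add: g)
  then have "winner E w (g - k) (g - k) = winner E w (G - k) (G - k)
      + 2 * lam * winner E w h (G - k) + lam\<^sup>2 * winner E w h h"
    by (simp only: winner_add_scaleR)
  moreover have "0 \<le> lam\<^sup>2 * winner E w h h"
    using winner_self_nonneg by simp
  ultimately show ?thesis
    using lam by (simp add: add_increasing2)
qed

lemma bdd_above_KD_set:
  assumes lam: "0 < lam"
  shows "bdd_above {winner E w (resolvent E w lam f) (delta x - delta y) | f. wLip1 E w f}"
proof -
  define B where "B = (\<Sum>z\<in>UNIV. hdeg E w z * (real (hdist E z x))\<^sup>2)"
  have le_one_plus_sq: "t \<le> 1 + t\<^sup>2" for t :: real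
  proof -
    have "0 \<le> (t - 1)\<^sup>2" by simp
    then have "2 * t \<le> t\<^sup>2 + 1" by (simp add: power2_eq_square algebra_simps)
    moreover have "0 \<le> t\<^sup>2" by simp
    ultimately show ?thesis by linarith
  qed
  have "winner E w (resolvent E w lam g) (delta x - delta y) \<le> 2 + B / hdeg E w x + B / hdeg E w y"
    if g: "wLip1 E w g" for g
  proof -
    define J where "J = resolvent E w lam g"
    define c where "c = g $ x / hdeg E w x"
    define k where "k = c *\<^sub>R (\<chi> z. hdeg E w z)"
    obtain h where h: "h \<in> hLap E w (Dinv E w J)" "g = J + lam *\<^sub>R h"
      using resolvent_solves[OF lam, of g] unfolding J_def by blast
    have "winner E w (J - k) (J - k) \<le> winner E w (g - k) (g - k)"
      unfolding k_def using lam by (intro resolvent_dist_degree_le[OF _ h]) simp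
    also have "\<dots> \<le> B"
      unfolding winner_def B_def
    proof (rule sum_mono)
      fix z
      have "\<bar>g $ z / hdeg E w z - c\<bar> \<le> real (hdist E z x)"
        using g unfolding wLip1_def c_def by blast
      from power_mono[OF this abs_ge_zero, of 2]
      have "hdeg E w z * (g $ z / hdeg E w z - c)\<^sup>2 \<le> hdeg E w z * (real (hdist E z x))\<^sup>2"
        using hdeg_pos by (simp add: mult_left_mono less_imp_le)
      moreover have "(g - k) $ z * (g - k) $ z / hdeg E w z = hdeg E w z * (g $ z / hdeg E w z - c)\<^sup>2"
        by (simp add: k_def power2_eq_square field_simps)
      ultimately show "(g - k) $ z * (g - k) $ z / hdeg E w z \<le> hdeg E w z * (real (hdist E z x))\<^sup>2"
        by simp
    qed
    finally have JB: "winner E w (J - k) (J - k) \<le> B" .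
    have comp: "(J $ v / hdeg E w v - c)\<^sup>2 \<le> B / hdeg E w v" for v
    proof -
      have "(J $ v / hdeg E w v - c)\<^sup>2 = ((J - k) $ v)\<^sup>2 / hdeg E w v / hdeg E w v"
        by (simp add: k_def power2_eq_square field_simps)
      also have "\<dots> \<le> B / hdeg E w v"
        using hdeg_pos order_trans[OF component_sq_le_winner JB]
        by (intro divide_right_mono) (simp_all add: less_imp_le)
      finally show ?thesis .
    qed
    have "winner E w J (delta x - delta y) = (J $ x / hdeg E w x - c) - (J $ y / hdeg E w y - c)"
      by (simp add: winner_delta_diff)
    also have "\<dots> \<le> (1 + (J $ x / hdeg E w x - c)\<^sup>2) + (1 + (J $ y / hdeg E w y - c)\<^sup>2)"
      using le_one_plus_sq[of "J $ x / hdeg E w x - c"] le_one_plus_sq[of "c - J $ y / hdeg E w y"]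
      by (simp add: power2_commute)
    also have "\<dots> \<le> 2 + B / hdeg E w x + B / hdeg E w y"
      using comp[of x] comp[of y] by simp
    finally show ?thesis unfolding J_def .
  qed
  then show ?thesis
    unfolding bdd_above_def by blast
qed

lemma eigenvector_Dinv_nonconstant:
  assumes "0 < \<mu>" "f \<noteq> 0" "\<mu> *\<^sub>R f \<in> hLap E w (Dinv E w f)"
  shows "\<exists>x y. Dinv E w f $ y < Dinv E w f $ x"
proof (rule ccontr)
  assume "\<not> ?thesis"
  then have "Dinv E w f = (Dinv E w f $ x0) *\<^sub>R (\<chi> i. 1)" for x0
    by (simp add: vec_eq_iff) (meson antisym not_le)
  then have "\<mu> *\<^sub>R f = 0"
    using hLap_const assms(3) by metis
  with assms(1,2) show False by simp
qed

lemma resolvent_eigenvector: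
  assumes lam: "0 < lam" and \<mu>: "0 \<le> \<mu>" and eig: "\<mu> *\<^sub>R f \<in> hLap E w (Dinv E w f)"
  shows "resolvent E w lam f = (1 / (1 + lam * \<mu>)) *\<^sub>R f"
proof (rule resolvent_eqI[OF lam])
  define s where "s = 1 / (1 + lam * \<mu>)"
  have "0 < 1 + lam * \<mu>" using lam \<mu> by (simp add: add_pos_nonneg)
  then have s: "0 < s" "s * (1 + lam * \<mu>) = 1" by (simp_all add: s_def)
  show "s *\<^sub>R (\<mu> *\<^sub>R f) \<in> hLap E w (Dinv E w (s *\<^sub>R f))"
    using hLap_scaleR[OF s(1) eig] by (simp add: Dinv_scaleR)
  have "s *\<^sub>R f + lam *\<^sub>R s *\<^sub>R \<mu> *\<^sub>R f = (s * (1 + lam * \<mu>)) *\<^sub>R f"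
    by (simp add: algebra_simps)
  then show "f = s *\<^sub>R f + lam *\<^sub>R s *\<^sub>R \<mu> *\<^sub>R f"
    by (simp add: s(2))
qed

lemma kappa_le_eigenvalue:
  assumes lam: "0 < lam" and \<mu>: "0 \<le> \<mu>" and eig: "\<mu> *\<^sub>R f \<in> hLap E w (Dinv E w f)"
    and lip: "wLip1 E w f" and dist: "0 < hdist E x y"
    and extremal: "winner E w f (delta x - delta y) = real (hdist E x y)"
  shows "kappa E w lam x y \<le> lam * \<mu> / (1 + lam * \<mu>)"
proof -
  have pos: "0 < 1 + lam * \<mu>" using lam \<mu> by (simp add: add_pos_nonneg)
  have "real (hdist E x y) / (1 + lam * \<mu>) = winner E w (resolvent E w lam f) (delta x - delta y)"
    by (simp add: resolvent_eigenvector[OF lam \<mu> eig] winner_eq_inner_Dinv extremal[unfolded winner_eq_inner_Dinv])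
  also have "\<dots> \<le> KD E w lam x y"
    unfolding KD_def using lip by (intro cSup_upper bdd_above_KD_set lam) blast
  finally have "1 / (1 + lam * \<mu>) \<le> KD E w lam x y / real (hdist E x y)"
    using dist by (simp add: field_simps)
  moreover have "1 - 1 / (1 + lam * \<mu>) = lam * \<mu> / (1 + lam * \<mu>)"
    using pos by (simp add: field_simps)
  ultimately show ?thesis
    unfolding kappa_def by linarith
qed


lemma kappa_bar_le_eigenvalue:
  assumes \<mu>: "0 \<le> \<mu>" and eig: "\<mu> *\<^sub>R f \<in> hLap E w (Dinv E w f)"
    and lip: "wLip1 E w f" and dist: "0 < hdist E x y"
    and extremal: "winner E w f (delta x - delta y) = real (hdist E x y)"
  shows "kappa_bar E w x y \<le> ereal \<mu>"
  unfolding kappa_bar_def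
proof (rule Limsup_bounded)
  show "\<forall>\<^sub>F lam in at_right 0. ereal (kappa E w lam x y / lam) \<le> ereal \<mu>"
    using eventually_at_right_less
  proof eventually_elim
    case (elim lam)
    have "kappa E w lam x y \<le> lam * \<mu> / (1 + lam * \<mu>)"
      by (rule kappa_le_eigenvalue[OF elim \<mu> eig lip dist extremal])
    also have "\<dots> \<le> lam * \<mu>"
      using elim \<mu> by (simp add: pos_divide_le_eq add_pos_nonneg algebra_simps)
    finally show ?case
      using elim by (simp add: pos_divide_le_eq mult.commute)
  qed
qed

end

section \<open>Extremal Lipschitz functions\<close>

lemma relpowp_hadj_commute: "(hadj E ^^ n) x y \<Longrightarrow> (hadj E ^^ n) y x"
proof (induction n arbitrary: x y)
  case (Suc n)
  then obtain u where "(hadj E ^^ n) x u" "hadj E u y"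
    by (auto elim: relpowp_Suc_E)
  then have "(hadj E ^^ n) u x" "hadj E y u"
    using Suc.IH by (blast, auto simp: hadj_def)
  then show ?case by (intro relpowp_Suc_I2)
qed simp

lemma hdist_commute: "hdist E x y = hdist E y x"
  unfolding hdist_def by (metis relpowp_hadj_commute)

lemma hdist_pos:
  assumes "hconnected E" "x \<noteq> y"
  shows "0 < hdist E x y"
proof -
  obtain n where "(hadj E ^^ n) x y"
    using assms(1) unfolding hconnected_def by blast
  then have "(hadj E ^^ hdist E x y) x y"
    unfolding hdist_def by (rule LeastI)
  with assms(2) show ?thesis
    by (cases "hdist E x y") auto
qed

lemma exists_extremal_wLip1_multiple:
  assumes conn: "hconnected E" and nonconst: "Dinv E w f $ y1 < Dinv E w f $ x1"
  obtains c x y where "0 < c" "x \<noteq> y" "wLip1 E w (c *\<^sub>R f)"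
    "winner E w (c *\<^sub>R f) (delta x - delta y) = real (hdist E x y)"
proof -
  define F where "F z = Dinv E w f $ z" for z
  define slope where "slope p = (F (fst p) - F (snd p)) / real (hdist E (fst p) (snd p))" for p
  define T where "T = {p :: 'a \<times> 'a. fst p \<noteq> snd p}"
  define r where "r = Max (slope ` T)"
  have x1y1: "(x1, y1) \<in> T" using nonconst by (auto simp: T_def)
  have "0 < slope (x1, y1)"
    using nonconst hdist_pos[OF conn] x1y1 by (simp add: slope_def F_def T_def)
  also have "\<dots> \<le> r" unfolding r_def using x1y1 by simp
  finally have r: "0 < r" .
  obtain p where p: "p \<in> T" "slope p = r"
    unfolding r_def using Max_in[of "slope ` T"] x1y1 by fastforce
  have le_r: "F x - F y \<le> r * real (hdist E x y)" for x y
  proof (cases "x = y")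
    case False
    then have "slope (x, y) \<le> r" unfolding r_def T_def by simp
    with hdist_pos[OF conn False] show ?thesis by (simp add: slope_def pos_divide_le_eq mult.commute)
  qed (use r in simp)
  have scaled: "(c *\<^sub>R f) $ z / hdeg E w z = c * F z" for c z
    by (simp add: F_def Dinv_def)
  show thesis
  proof (rule that[of "1 / r" "fst p" "snd p"])
    show "0 < 1 / r" "fst p \<noteq> snd p" using r p(1) by (simp_all add: T_def)
    show "wLip1 E w ((1 / r) *\<^sub>R f)"
      unfolding wLip1_def scaled
    proof (intro allI)
      fix x y
      have "\<bar>F x - F y\<bar> \<le> r * real (hdist E x y)"
        using le_r[of x y] le_r[of y x] hdist_commute[of E x y] by simp
      then show "\<bar>1 / r * F x - 1 / r * F y\<bar> \<le> real (hdist E x y)"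
        using r by (simp add: diff_divide_distrib[symmetric] abs_divide pos_divide_le_eq mult.commute)
    qed
    have "F (fst p) - F (snd p) = r * real (hdist E (fst p) (snd p))"
      using p hdist_pos[OF conn, of "fst p" "snd p"] by (simp add: T_def slope_def field_simps)
    then show "winner E w ((1 / r) *\<^sub>R f) (delta (fst p) - delta (snd p)) = real (hdist E (fst p) (snd p))"
      unfolding winner_delta_diff scaled using r by (simp add: diff_divide_distrib[symmetric])
  qed
qed

theorem mainTheorem14:
  fixes E :: "'a::finite set set" and w :: "'a set \<Rightarrow> real"
    and f :: "real^'a" and \<mu> :: real
  assumes "CARD('a) \<ge> 2"
    and "\<forall>e\<in>E. e \<noteq> {}"
    and "\<forall>e\<in>E. w e > 0"
    and "hconnected E"
    and "\<forall>x. hdeg E w x > 0"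
    and "\<mu> > 0"
    and "f \<noteq> 0"
    and "nLap0 E w f = \<mu> *\<^sub>R f"
  shows "kappa_bar0 E w \<le> ereal \<mu>"
proof -
  interpret weighted_hypergraph E w
    using assms(2,3,5) by unfold_locales
  have eig: "\<mu> *\<^sub>R f \<in> hLap E w (Dinv E w f)"
    using nLap0_in_nLap[of f] assms(8) by (simp add: nLap_def)
  obtain x1 y1 where "Dinv E w f $ y1 < Dinv E w f $ x1"
    using eigenvector_Dinv_nonconstant[OF assms(6,7) eig] by blast
  then obtain c x y where c: "0 < c" "x \<noteq> y" "wLip1 E w (c *\<^sub>R f)"
    "winner E w (c *\<^sub>R f) (delta x - delta y) = real (hdist E x y)"
    using exists_extremal_wLip1_multiple[OF assms(4)] by blast
  have eig_c: "\<mu> *\<^sub>R (c *\<^sub>R f) \<in> hLap E w (Dinv E w (c *\<^sub>R f))"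
    using hLap_scaleR[OF c(1) eig] by (simp add: Dinv_scaleR mult.commute)
  have "kappa_bar E w x y \<le> ereal \<mu>"
    using assms(6) by (intro kappa_bar_le_eigenvalue[OF _ eig_c c(3) hdist_pos[OF assms(4) c(2)] c(4)]) simp
  moreover have "kappa_bar0 E w \<le> kappa_bar E w x y"
    unfolding kappa_bar0_def using c(2) by (intro INF_lower2[of "(x, y)"]) auto
  ultimately show ?thesis by simp
qed

end
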